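(* Let $q$ be an even integer with $q\geq4$. Then $\sqrt{(q-1)(17q-1)}$ is an integer if and only if \[ q\in\left\{\frac1{34}\left(\operatorname{tr}\!\left((2177+528\sqrt{17})^{m}(433+105\sqrt{17})\right)+18\right)\;\middle|\;m\in\mathbb{Z}\right\}. \]
   Context: $\operatorname{tr}$ denotes the trace from $\mathbb{Q}(\sqrt{17})$ to $\mathbb{Q}$, i.e. $\operatorname{tr}(a+b\sqrt{17})=2a$ for $a,b\in\mathbb{Q}$. *)

theory Defs
  imports Complex_Main
begin

text \<open>Q(sqrt 17) is viewed inside the reals; the trace to Q is
  tr(a + b sqrt 17) = 2a for rational a, b (well defined since sqrt 17 is irrational).\<close>

definition tr17 :: "real \<Rightarrow> real" where
  "tr17 x = (THE t. \<exists>a b :: rat. x = of_rat a + of_rat b * sqrt 17 \<and> t = 2 * of_rat a)"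

end

theory Submission
  imports Defs "HOL-Computational_Algebra.Primes"
begin

text \<open>With \<open>X = 17 q - 9\<close>, the condition \<open>(q - 1)(17 q - 1) = t\<^sup>2\<close> becomes the Pell-type
  equation \<open>X\<^sup>2 - 17 t\<^sup>2 = 64\<close> with \<open>X \<equiv> 25 (mod 34)\<close>. Dividing by the fundamental unit
  \<open>u = 33 + 8 \<surd>17\<close> lowers \<open>X\<close> as long as \<open>|t| \<ge> 8\<close>, and the only small solution with \<open>X\<close> odd
  is \<open>9 \<plusminus> \<surd>17\<close>; so every solution is \<open>X \<plusminus> t \<surd>17 = u\<^sup>k (9 + \<surd>17)\<close>. Multiplication by \<open>u\<close>
  negates \<open>X\<close> modulo 34, hence \<open>X \<equiv> 25\<close> singles out the odd \<open>k = 2m + 1\<close>, for which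
  \<open>u\<^sup>k (9 + \<surd>17) = (2177 + 528 \<surd>17)\<^sup>m (433 + 105 \<surd>17)\<close>, whose trace is \<open>2 X = 34 q - 18\<close>.\<close>

lemma sqrt_prime_irrational:
  assumes "prime (p::nat)"
  shows "sqrt (real p) \<notin> \<rat>"
proof
  assume "sqrt (real p) \<in> \<rat>"
  then obtain m n :: nat where "n \<noteq> 0" and "\<bar>sqrt (real p)\<bar> = m / n" and "coprime m n"
    by (rule Rats_abs_nat_div_natE)
  then have "real m = sqrt (real p) * n"
    by (simp add: field_simps)
  then have "real (m^2) = real (p * n^2)"
    by (simp add: power_mult_distrib)
  then have sq: "m^2 = p * n^2"
    by (simp only: of_nat_eq_iff)
  then have "p dvd m"
    using assms prime_dvd_power by (metis dvd_triv_left)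
  then obtain k where "m = p * k" ..
  with sq have "n^2 = p * k^2"
    using assms by (simp add: power2_eq_square prime_gt_0_nat algebra_simps)
  then have "p dvd n"
    using assms prime_dvd_power by (metis dvd_triv_left)
  with \<open>p dvd m\<close> \<open>coprime m n\<close> assms show False
    by (metis coprime_common_divisor not_prime_unit)
qed

lemma sqrt17_irrational: "sqrt 17 \<notin> \<rat>"
proof -
  have "prime (17::nat)"
    by code_simp
  then show ?thesis
    using sqrt_prime_irrational by fastforce
qed

lemma sqrt17_coeffs_eq:
  fixes a b c d :: rat
  assumes "of_rat a + of_rat b * sqrt 17 = of_rat c + of_rat d * sqrt 17"
  shows "a = c \<and> b = d"
proof (cases "b = d")
  case False
  then have "sqrt 17 = of_rat ((c - a) / (b - d))"
    using assms by (simp add: of_rat_divide of_rat_diff field_simps)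
  with sqrt17_irrational show ?thesis
    by (metis Rats_of_rat)
qed (use assms in simp)

lemma of_int_sqrt17_eq_iff:
  "of_int a + of_int b * sqrt 17 = of_int c + of_int d * sqrt 17 \<longleftrightarrow> a = c \<and> b = d"
  using sqrt17_coeffs_eq[of "of_int a" "of_int b" "of_int c" "of_int d"] by auto

lemma tr17_of_rat: "tr17 (of_rat a + of_rat b * sqrt 17) = 2 * of_rat a"
  unfolding tr17_def by (rule the_equality) (auto dest: sqrt17_coeffs_eq)

lemma tr17_of_int: "tr17 (of_int a + of_int b * sqrt 17) = 2 * of_int a"
  using tr17_of_rat[of "of_int a" "of_int b"] by simp

lemma mult_sqrt17:
  "(of_int a + of_int b * sqrt 17) * (of_int c + of_int d * sqrt 17)
     = of_int (a * c + 17 * b * d) + of_int (a * d + b * c) * (sqrt 17 :: real)"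
  by (simp add: algebra_simps)

lemma brahmagupta_identity17:
  fixes a b c d :: int
  shows "(a * c + 17 * b * d)^2 - 17 * (a * d + b * c)^2 = (a^2 - 17 * b^2) * (c^2 - 17 * d^2)"
  by (simp add: power2_eq_square algebra_simps)

lemma norm64_small_solutions:
  fixes X y :: int
  assumes "X^2 - 17 * y^2 = 64" "odd X" "0 < X" "0 \<le> y" "y \<le> 7"
  shows "X = 9 \<and> y = 1"
proof -
  have "y^2 \<le> 7^2"
    using assms(4,5) by (intro power_mono) auto
  then have "X^2 < 30^2"
    using assms(1) by simp
  then have "X < 30"
    by (rule power_less_imp_less_base) simp
  then have "X \<in> set [1..29]" "y \<in> set [0..7]"
    using assms(3-5) by auto
  then show ?thesis
    using assms(1,2) by (auto simp: upto.simps)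
qed

lemma sqrt17_unit_inverse: "inverse (33 + 8 * sqrt 17) = (33 - 8 * sqrt 17 :: real)"
  by (rule inverse_unique) (simp add: algebra_simps)

lemma sqrt17_unit_pos: "0 < (33 + 8 * sqrt 17 :: real)"
  by (intro add_pos_nonneg) auto

lemma sqrt17_unit_powi_succ:
  "(33 + 8 * sqrt 17) powi (k + 1) = (33 + 8 * sqrt 17) * (33 + 8 * sqrt 17 :: real) powi k"
  using sqrt17_unit_pos by (intro power_int_add_1') simp

lemma sqrt17_unit_powi_pred:
  "(33 + 8 * sqrt 17) powi (k - 1) = (33 - 8 * sqrt 17) * (33 + 8 * sqrt 17 :: real) powi k"
proof -
  have "(33 + 8 * sqrt 17 :: real) powi (k - 1) = (33 + 8 * sqrt 17) powi k / (33 + 8 * sqrt 17)"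
    using sqrt17_unit_pos power_int_diff[of "33 + 8 * sqrt 17 :: real" k 1] by simp
  then show ?thesis
    by (simp add: divide_inverse sqrt17_unit_inverse mult.commute)
qed

lemma dvd34_unit_step:
  fixes a b c :: int
  assumes "34 dvd a - c"
  shows "34 dvd (33 * a + 136 * b) - (- c)"
proof -
  have "(33 * a + 136 * b) - (- c) = 33 * (a - c) + 34 * (c + 4 * b)"
    by simp
  then show ?thesis
    by (metis assms dvd_add dvd_mult dvd_triv_left)
qed

lemma sqrt17_unit_orbit:
  fixes a0 b0 :: int
  shows "\<exists>a b. (33 + 8 * sqrt 17) powi k * (of_int a0 + of_int b0 * sqrt 17)
                 = of_int a + of_int b * sqrt 17
             \<and> a^2 - 17 * b^2 = a0^2 - 17 * b0^2
             \<and> 34 dvd a - (if even k then a0 else - a0)"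
proof (induction k rule: int_induct[where k = 0])
  case base
  show ?case
    by (intro exI[of _ a0] exI[of _ b0]) simp
next
  case (step1 i)
  then obtain a b where ab: "(33 + 8 * sqrt 17) powi i * (of_int a0 + of_int b0 * sqrt 17)
      = of_int a + of_int b * sqrt 17"
    and "a^2 - 17 * b^2 = a0^2 - 17 * b0^2"
    and "34 dvd a - (if even i then a0 else - a0)"
    by blast
  moreover have "(33 + 8 * sqrt 17) powi (i + 1) * (of_int a0 + of_int b0 * sqrt 17)
      = of_int (33 * a + 136 * b) + of_int (8 * a + 33 * b) * sqrt 17"
    using mult_sqrt17[of 33 8 a b] by (simp add: sqrt17_unit_powi_succ ab mult.assoc)
  moreover have "(33 * a + 136 * b)^2 - 17 * (8 * a + 33 * b)^2 = a^2 - 17 * b^2"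
    using brahmagupta_identity17[of 33 a 8 b] by (simp add: add.commute)
  moreover have "34 dvd (33 * a + 136 * b) - (if even (i + 1) then a0 else - a0)"
    using dvd34_unit_step[OF \<open>34 dvd a - _\<close>, of b] by (cases "even i") simp_all
  ultimately show ?case
    by metis
next
  case (step2 i)
  then obtain a b where ab: "(33 + 8 * sqrt 17) powi i * (of_int a0 + of_int b0 * sqrt 17)
      = of_int a + of_int b * sqrt 17"
    and "a^2 - 17 * b^2 = a0^2 - 17 * b0^2"
    and "34 dvd a - (if even i then a0 else - a0)"
    by blast
  moreover have "(33 + 8 * sqrt 17) powi (i - 1) * (of_int a0 + of_int b0 * sqrt 17)
      = of_int (33 * a + 136 * (- b)) + of_int (33 * b - 8 * a) * sqrt 17"
    using mult_sqrt17[of 33 "-8" a b] by (simp add: sqrt17_unit_powi_pred ab mult.assoc)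
  moreover have "(33 * a + 136 * (- b))^2 - 17 * (33 * b - 8 * a)^2 = a^2 - 17 * b^2"
    using brahmagupta_identity17[of 33 a "-8" b] by (simp add: algebra_simps)
  moreover have "34 dvd (33 * a + 136 * (- b)) - (if even (i - 1) then a0 else - a0)"
    using dvd34_unit_step[OF \<open>34 dvd a - _\<close>, of "- b"] by (cases "even i") simp_all
  ultimately show ?case
    by metis
qed

lemma norm64_descent:
  fixes X y :: int
  assumes "X^2 - 17 * y^2 = 64" "0 < X" "8 \<le> y"
  shows "0 < 33 * X - 136 * y" "33 * X - 136 * y < X"
proof -
  have "(33 * X)^2 = (136 * y)^2 + 17 * y^2 + 69696"
    using assms(1) by (simp add: power_mult_distrib)
  then have "(136 * y)^2 < (33 * X)^2"
    using zero_le_power2[of y] by linarith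
  then have "136 * y < 33 * X"
    by (rule power_less_imp_less_base) (use assms(2) in simp)
  then show "0 < 33 * X - 136 * y"
    by simp
  have "8^2 \<le> y^2"
    using assms(3) by (intro power_mono) auto
  then have "(4 * X)^2 < (17 * y)^2"
    using assms(1) by (simp add: power_mult_distrib)
  then have "4 * X < 17 * y"
    by (rule power_less_imp_less_base) (use assms(3) in simp)
  then show "33 * X - 136 * y < X"
    by simp
qed

lemma norm64_orbit_representative:
  fixes X y :: int
  assumes "X^2 - 17 * y^2 = 64" "0 < X" "odd X"
  shows "\<exists>k b. \<bar>b\<bar> = \<bar>y\<bar> \<and>
           of_int X + of_int b * sqrt 17 = (33 + 8 * sqrt 17) powi k * (9 + sqrt 17)"
  using assms
proof (induction "nat X" arbitrary: X y rule: less_induct)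
  case less
  define z where "z = \<bar>y\<bar>"
  have norm: "X^2 - 17 * z^2 = 64" and "0 \<le> z"
    using less.prems by (simp_all add: z_def)
  show ?case
  proof (cases "z \<le> 7")
    case True
    then have "X = 9 \<and> z = 1"
      using norm64_small_solutions norm less.prems \<open>0 \<le> z\<close> by blast
    then show ?thesis
      by (intro exI[of _ 0] exI[of _ 1]) (simp add: z_def)
  next
    case False
    define X' y' where "X' = 33 * X - 136 * z" and "y' = 33 * z - 8 * X"
    have "0 < X'" "X' < X"
      using norm64_descent[OF norm] less.prems False by (simp_all add: X'_def)
    moreover have "X'^2 - 17 * y'^2 = 64"
      using brahmagupta_identity17[of 33 X "-8" z] norm
      by (simp add: X'_def y'_def algebra_simps)
    moreover have "odd X'"
      using less.prems by (simp add: X'_def)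
    ultimately obtain k b' where b': "\<bar>b'\<bar> = \<bar>y'\<bar>"
      and k: "of_int X' + of_int b' * sqrt 17 = (33 + 8 * sqrt 17) powi k * (9 + sqrt 17)"
      using less.hyps by (metis nat_less_eq_zless less_imp_le)
    have up:
      "of_int X + of_int z * sqrt 17 = (33 + 8 * sqrt 17) * (of_int X' + of_int y' * sqrt 17)"
      using mult_sqrt17[of 33 8 X' y'] by (simp add: X'_def y'_def)
    have down:
      "of_int X - of_int z * sqrt 17 = (33 - 8 * sqrt 17) * (of_int X' - of_int y' * sqrt 17)"
      using mult_sqrt17[of 33 "-8" X' "-y'"] by (simp add: X'_def y'_def algebra_simps)
    show ?thesis
    proof (cases "b' = y'")
      case True
      with up k
      have "of_int X + of_int z * sqrt 17 = (33 + 8 * sqrt 17) powi (k + 1) * (9 + sqrt 17)"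
        by (simp add: sqrt17_unit_powi_succ)
      then show ?thesis
        by (intro exI[of _ "k + 1"] exI[of _ z]) (simp add: z_def)
    next
      case False
      with b' have "b' = - y'"
        by auto
      with down k
      have "of_int X + of_int (- z) * sqrt 17 = (33 + 8 * sqrt 17) powi (k - 1) * (9 + sqrt 17)"
        by (simp add: sqrt17_unit_powi_pred)
      then show ?thesis
        by (intro exI[of _ "k - 1"] exI[of _ "- z"]) (simp add: z_def)
    qed
  qed
qed

lemma sqrt17_unit_powi_odd:
  "(2177 + 528 * sqrt 17) powi m * (433 + 105 * sqrt 17)
     = (33 + 8 * sqrt 17) powi (2 * m + 1) * (9 + sqrt 17 :: real)"
proof -
  have "(2177 + 528 * sqrt 17 :: real) = (33 + 8 * sqrt 17) powi 2"
    by (simp add: power2_eq_square algebra_simps)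
  moreover have "(433 + 105 * sqrt 17 :: real) = (33 + 8 * sqrt 17) * (9 + sqrt 17)"
    by (simp add: algebra_simps)
  ultimately show ?thesis
    by (simp add: sqrt17_unit_powi_succ power_int_mult mult.assoc)
qed

lemma sqrt17_odd_orbit:
  "\<exists>a b. (2177 + 528 * sqrt 17) powi m * (433 + 105 * sqrt 17) = of_int a + of_int b * sqrt 17
     \<and> a^2 - 17 * b^2 = 64"
  using sqrt17_unit_orbit[of "2 * m + 1" 9 1] by (auto simp: sqrt17_unit_powi_odd)

lemma norm64_class25_iff:
  fixes X :: int
  assumes "0 < X" "X mod 34 = 25"
  shows "(\<exists>y. X^2 - 17 * y^2 = 64) \<longleftrightarrow>
         (\<exists>m b. (2177 + 528 * sqrt 17) powi m * (433 + 105 * sqrt 17) = of_int X + of_int b * sqrt 17)"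
proof
  assume "\<exists>y. X^2 - 17 * y^2 = 64"
  moreover have "odd X"
    using assms(2) by presburger
  ultimately obtain k b
    where k: "of_int X + of_int b * sqrt 17 = (33 + 8 * sqrt 17) powi k * (9 + sqrt 17)"
    using norm64_orbit_representative assms(1) by blast
  obtain a b' where "(33 + 8 * sqrt 17) powi k * (of_int 9 + of_int 1 * sqrt 17)
      = of_int a + of_int b' * sqrt 17"
    and "34 dvd a - (if even k then 9 else - 9)"
    using sqrt17_unit_orbit[of k 9 1] by blast
  with k assms(2) have "odd k"
    by (auto simp: of_int_sqrt17_eq_iff simp flip: mod_eq_dvd_iff)
  then obtain m where "k = 2 * m + 1"
    by (rule oddE)
  with k show "\<exists>m b. (2177 + 528 * sqrt 17) powi m * (433 + 105 * sqrt 17)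
      = of_int X + of_int b * sqrt 17"
    by (metis sqrt17_unit_powi_odd)
next
  assume "\<exists>m b. (2177 + 528 * sqrt 17) powi m * (433 + 105 * sqrt 17)
      = of_int X + of_int b * sqrt 17"
  then show "\<exists>y. X^2 - 17 * y^2 = 64"
    by (metis sqrt17_odd_orbit of_int_sqrt17_eq_iff)
qed

lemma sqrt17_odd_orbit_trace_iff:
  "real_of_int q = (tr17 ((2177 + 528 * sqrt 17) powi m * (433 + 105 * sqrt 17)) + 18) / 34
     \<longleftrightarrow> (\<exists>b. (2177 + 528 * sqrt 17) powi m * (433 + 105 * sqrt 17)
              = of_int (17 * q - 9) + of_int b * sqrt 17)"
proof -
  obtain a b
    where w: "(2177 + 528 * sqrt 17) powi m * (433 + 105 * sqrt 17) = of_int a + of_int b * sqrt 17"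
    using sqrt17_odd_orbit by blast
  have "real_of_int q = (tr17 (of_int a + of_int b * sqrt 17) + 18) / 34
          \<longleftrightarrow> real_of_int (34 * q) = real_of_int (2 * a + 18)"
    by (simp add: tr17_of_int field_simps)
  also have "\<dots> \<longleftrightarrow> a = 17 * q - 9"
    by (simp only: of_int_eq_iff) auto
  finally show ?thesis
    unfolding w of_int_sqrt17_eq_iff by auto
qed

lemma sqrt_of_int_in_Ints_iff:
  fixes n :: int
  assumes "0 \<le> n"
  shows "sqrt (of_int n) \<in> \<int> \<longleftrightarrow> (\<exists>t. n = t^2)"
proof
  assume "sqrt (of_int n) \<in> \<int>"
  then obtain t where "sqrt (of_int n) = of_int t"
    by (elim Ints_cases)
  then have "of_int n = (of_int t :: real)^2"
    using assms by (metis of_int_0_le_iff real_sqrt_pow2)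
  then show "\<exists>t. n = t^2"
    by (metis of_int_eq_iff of_int_power)
qed auto

theorem lemmaA3:
  fixes q :: int
  assumes "even q" and "q \<ge> 4"
  shows "sqrt (real_of_int ((q - 1) * (17 * q - 1))) \<in> \<int> \<longleftrightarrow>
         real_of_int q \<in> {(tr17 ((2177 + 528 * sqrt 17) powi m * (433 + 105 * sqrt 17)) + 18) / 34
                            | m :: int. True}"
proof -
  define X where "X = 17 * q - 9"
  have X: "0 < X" "X mod 34 = 25"
    using assms unfolding X_def by presburger+
  have "sqrt (real_of_int ((q - 1) * (17 * q - 1))) \<in> \<int>
          \<longleftrightarrow> (\<exists>t. (q - 1) * (17 * q - 1) = t^2)"
    using assms(2) by (intro sqrt_of_int_in_Ints_iff) simp
  also have "\<dots> \<longleftrightarrow> (\<exists>t. X^2 - 17 * t^2 = 64)"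
  proof -
    have "X^2 - 17 * t^2 - 64 = 17 * ((q - 1) * (17 * q - 1) - t^2)" for t
      by (simp add: X_def power2_eq_square algebra_simps)
    then show ?thesis
      by (metis eq_iff_diff_eq_0 mult_eq_0_iff zero_neq_numeral)
  qed
  also have "\<dots> \<longleftrightarrow> (\<exists>m b. (2177 + 528 * sqrt 17) powi m * (433 + 105 * sqrt 17)
                      = of_int X + of_int b * sqrt 17)"
    using norm64_class25_iff[OF X] .
  also have "\<dots> \<longleftrightarrow> real_of_int q \<in> {(tr17 ((2177 + 528 * sqrt 17) powi m * (433 + 105 * sqrt 17)) + 18) / 34
                            | m :: int. True}"
    by (simp only: X_def mem_Collect_eq sqrt17_odd_orbit_trace_iff simp_thms)
  finally show ?thesis .
qed

end
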